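(* There exists a routing game that is asymptotically well designed (i.e. belongs to AWDG) but is not gaugeable.
   Context: A non-atomic congestion game (NCG) consists of: a finite set $A$ of resources; an integer $K\ge 1$ of user groups; pairwise disjoint finite nonempty sets $\mathcal S_1,\dots,\mathcal S_K$ of strategies, $\mathcal S=\bigcup_{k}\mathcal S_k$ (strategies in $\mathcal S_k$ are available only to group $k$); constants $r(a,s)\ge 0$ ($a\in A$, $s\in\mathcal S$) with $\sum_{a\in A} r(a,s)>0$ for every $s$ and $\sum_{s\in\mathcal S} r(a,s)>0$ for every $a$; continuous nondecreasing consumption price functions $\tau_a:[0,\infty)\to[0,\infty)$; and a user volume vector $d=(d_k)_{k=1}^K\in\mathbb R_{\ge 0}^K$ with total volume $T(d)=\sum_k d_k$. The game structure is fixed while $d$ varies (over all of $\mathbb R^K_{\ge0}$ unless a set of admissible user volume vectors is specified, in which case every quantification over user volume vectors ranges over that set). A feasible profile for $d$ is $f=(f_s)_{s\in\mathcal S}$ with $f_s\ge 0$ and $\sum_{s\in\mathcal S_k} f_s=d_k$ for all $k$; its resource loads are $f_a=\sum_{s} r(a,s)f_s$, strategy prices $\tau_s(f)=\sum_{a} r(a,s)\tau_a(f_a)$, and social cost $C(f)=\sum_a f_a\tau_a(f_a)=\sum_s f_s\tau_s(f)$. $f$ is an NE-profile (Nash equilibrium) if for every $k$ and all $s,s'\in\mathcal S_k$ with $f_s>0$ we have $\tau_s(f)\le\tau_{s'}(f)$; it is an SO-profile if it minimizes $C$ among feasible profiles for $d$. All NE-profiles for a given $d$ have the same cost, as do all SO-profiles.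 The price of anarchy is $\mathrm{PoA}(d)=C(\tilde f)/C(f^* )$ for an NE-profile $\tilde f$ and an SO-profile $f^*$ for $d$ (when $C(f^* )>0$). The game is asymptotically well designed (in AWDG) if $\mathrm{PoA}(d^{(n)})\to 1$ for every sequence of user volume vectors with $T(d^{(n)})\to\infty$. A routing game is an NCG given by a directed graph $G=(V,A)$ whose arcs are the resources, $K$ origin–destination pairs $(o_k,t_k)$, $\mathcal S_k$ the set of directed $o_k$–$t_k$ paths in $G$, $r(a,s)=1$ if arc $a$ lies on path $s$ and $0$ otherwise, $\tau_a$ the travel time function of arc $a$, and $d_k$ the travel demand of pair $k$. A positive function $g$ is regularly varying if $\lim_{t\to\infty} g(tx)/g(t)$ exists and is finite and nonzero for every $x>0$. A routing game is gaugeable if: (G1) there is a regularly varying $g$ such that $c_a:=\lim_{x\to\infty}\tau_a(x)/g(x)\in[0,+\infty]$ exists for every $a\in A$; (G2) $r(a,s)$ is the indicator of $a\in s$; (G3) every group $k$ has a tight strategy, i.e. some $s\in\mathcal S_k$ with $c_s:=\max\{c_a: r(a,s)=1\}<\infty$; (G4) for every sequence of user volume vectors with $T\to\infty$, $\liminf T^{tight}/T>0$, where group $k$ is called tight if $\min_{s\in\mathcal S_k} c_s\in(0,\infty)$ and $T^{tight}=\sum_{k\text{ tight}} d_k$. *)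

theory Defs
  imports "HOL-Analysis.Analysis"
begin

record ('a, 's) ncg =
  res    :: "'a set"
  ngroups :: nat
  strats :: "nat \<Rightarrow> 's set"
  rr     :: "'a \<Rightarrow> 's \<Rightarrow> real"
  price  :: "'a \<Rightarrow> real \<Rightarrow> real"

definition all_strats :: "('a, 's) ncg \<Rightarrow> 's set" where
  "all_strats G = (\<Union>k<ngroups G. strats G k)"

definition volume_vector :: "('a, 's) ncg \<Rightarrow> (nat \<Rightarrow> real) \<Rightarrow> bool" where
  "volume_vector G d \<longleftrightarrow> (\<forall>k<ngroups G. d k \<ge> 0)"

definition total_volume :: "('a, 's) ncg \<Rightarrow> (nat \<Rightarrow> real) \<Rightarrow> real" where
  "total_volume G d = (\<Sum>k<ngroups G. d k)"

definition feasible :: "('a, 's) ncg \<Rightarrow> (nat \<Rightarrow> real) \<Rightarrow> ('s \<Rightarrow> real) \<Rightarrow> bool" where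
  "feasible G d f \<longleftrightarrow> (\<forall>s\<in>all_strats G. f s \<ge> 0) \<and>
     (\<forall>k<ngroups G. (\<Sum>s\<in>strats G k. f s) = d k)"

definition load :: "('a, 's) ncg \<Rightarrow> ('s \<Rightarrow> real) \<Rightarrow> 'a \<Rightarrow> real" where
  "load G f a = (\<Sum>s\<in>all_strats G. rr G a s * f s)"

definition strat_price :: "('a, 's) ncg \<Rightarrow> ('s \<Rightarrow> real) \<Rightarrow> 's \<Rightarrow> real" where
  "strat_price G f s = (\<Sum>a\<in>res G. rr G a s * price G a (load G f a))"

definition social_cost :: "('a, 's) ncg \<Rightarrow> ('s \<Rightarrow> real) \<Rightarrow> real" where
  "social_cost G f = (\<Sum>a\<in>res G. load G f a * price G a (load G f a))"

definition is_NE :: "('a, 's) ncg \<Rightarrow> (nat \<Rightarrow> real) \<Rightarrow> ('s \<Rightarrow> real) \<Rightarrow> bool" where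
  "is_NE G d f \<longleftrightarrow> feasible G d f \<and>
     (\<forall>k<ngroups G. \<forall>s\<in>strats G k. \<forall>s'\<in>strats G k.
        f s > 0 \<longrightarrow> strat_price G f s \<le> strat_price G f s')"

definition is_SO :: "('a, 's) ncg \<Rightarrow> (nat \<Rightarrow> real) \<Rightarrow> ('s \<Rightarrow> real) \<Rightarrow> bool" where
  "is_SO G d f \<longleftrightarrow> feasible G d f \<and>
     (\<forall>g. feasible G d g \<longrightarrow> social_cost G f \<le> social_cost G g)"

text \<open>Asymptotically well designed: PoA(d^(n)) -> 1 whenever T(d^(n)) -> infinity.
  Since all NE (resp. SO) profiles have the same cost, PoA(d) is the ratio of the cost of any
  NE-profile to the cost of any SO-profile.\<close>
definition AWDG :: "('a, 's) ncg \<Rightarrow> bool" where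
  "AWDG G \<longleftrightarrow> (\<forall>(dn :: nat \<Rightarrow> nat \<Rightarrow> real) fne fso.
     (\<forall>n. volume_vector G (dn n)) \<and>
     filterlim (\<lambda>n. total_volume G (dn n)) at_top sequentially \<and>
     (\<forall>n. is_NE G (dn n) (fne n)) \<and> (\<forall>n. is_SO G (dn n) (fso n)) \<longrightarrow>
     (\<lambda>n. social_cost G (fne n) / social_cost G (fso n)) \<longlonglongrightarrow> 1)"

text \<open>A directed (multi)graph with arc set Arcs (arcs are natural numbers), tail and head maps
  tl, hd into vertices (natural numbers).\<close>
definition is_path :: "nat set \<Rightarrow> (nat \<Rightarrow> nat) \<Rightarrow> (nat \<Rightarrow> nat) \<Rightarrow> nat \<Rightarrow> nat \<Rightarrow> nat list \<Rightarrow> bool" where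
  "is_path Arcs tail head u v p \<longleftrightarrow> set p \<subseteq> Arcs \<and>
     (p = [] \<longrightarrow> u = v) \<and>
     (p \<noteq> [] \<longrightarrow> tail (p ! 0) = u \<and> head (last p) = v \<and>
        (\<forall>i. Suc i < length p \<longrightarrow> head (p ! i) = tail (p ! Suc i))) \<and>
     distinct (u # map head p)"

text \<open>Strategies of group k are tagged with k, so that the strategy sets
  of different groups are disjoint: S_k = {(k,p) | p is a directed o_k - t_k path}.\<close>
definition routing_ncg ::
  "nat set \<Rightarrow> (nat \<Rightarrow> nat) \<Rightarrow> (nat \<Rightarrow> nat) \<Rightarrow> nat \<Rightarrow> (nat \<Rightarrow> nat \<times> nat)
   \<Rightarrow> (nat \<Rightarrow> real \<Rightarrow> real) \<Rightarrow> (nat, nat \<times> nat list) ncg" where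
  "routing_ncg Arcs tail head K od tau =
     \<lparr> res = Arcs, ngroups = K,
       strats = (\<lambda>k. {(k, p) | p. is_path Arcs tail head (fst (od k)) (snd (od k)) p}),
       rr = (\<lambda>a s. if a \<in> set (snd s) then 1 else 0),
       price = tau \<rparr>"

definition routing_game_wf ::
  "nat set \<Rightarrow> (nat \<Rightarrow> nat) \<Rightarrow> (nat \<Rightarrow> nat) \<Rightarrow> nat \<Rightarrow> (nat \<Rightarrow> nat \<times> nat)
   \<Rightarrow> (nat \<Rightarrow> real \<Rightarrow> real) \<Rightarrow> bool" where
  "routing_game_wf Arcs tail head K od tau \<longleftrightarrow>
     (let G = routing_ncg Arcs tail head K od tau in
       finite Arcs \<and> K \<ge> 1 \<and>
       (\<forall>k<K. finite (strats G k) \<and> strats G k \<noteq> {}) \<and>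
       (\<forall>s\<in>all_strats G. (\<Sum>a\<in>Arcs. rr G a s) > 0) \<and>
       (\<forall>a\<in>Arcs. (\<Sum>s\<in>all_strats G. rr G a s) > 0) \<and>
       (\<forall>a\<in>Arcs. continuous_on {0..} (tau a) \<and> mono_on {0..} (tau a) \<and>
                  (\<forall>x\<ge>0. tau a x \<ge> 0)))"

definition regularly_varying :: "(real \<Rightarrow> real) \<Rightarrow> bool" where
  "regularly_varying g \<longleftrightarrow> (\<forall>x>0. g x > 0) \<and>
     (\<forall>x>0. \<exists>L. L \<noteq> 0 \<and> ((\<lambda>t. g (t * x) / g t) \<longlongrightarrow> L) at_top)"

definition strat_gauge :: "('a, 's) ncg \<Rightarrow> ('a \<Rightarrow> ereal) \<Rightarrow> 's \<Rightarrow> ereal" where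
  "strat_gauge G c s = Max {c a | a. a \<in> res G \<and> rr G a s = 1}"

definition tight_group :: "('a, 's) ncg \<Rightarrow> ('a \<Rightarrow> ereal) \<Rightarrow> nat \<Rightarrow> bool" where
  "tight_group G c k \<longleftrightarrow>
     (let m = Min (strat_gauge G c ` strats G k) in 0 < m \<and> m < \<infinity>)"

definition tight_volume :: "('a, 's) ncg \<Rightarrow> ('a \<Rightarrow> ereal) \<Rightarrow> (nat \<Rightarrow> real) \<Rightarrow> real" where
  "tight_volume G c d = (\<Sum>k | k < ngroups G \<and> tight_group G c k. d k)"

definition gaugeable :: "('a, 's) ncg \<Rightarrow> bool" where
  "gaugeable G \<longleftrightarrow> (\<exists>g c.
     \<comment> \<open>(G1)\<close>
     regularly_varying g \<and>
     (\<forall>a\<in>res G. ((\<lambda>x. ereal (price G a x / g x)) \<longlongrightarrow> c a) at_top \<and> c a \<ge> 0) \<and>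
     \<comment> \<open>(G2): r(a,s) is an indicator\<close>
     (\<forall>a\<in>res G. \<forall>s\<in>all_strats G. rr G a s = 0 \<or> rr G a s = 1) \<and>
     \<comment> \<open>(G3)\<close>
     (\<forall>k<ngroups G. \<exists>s\<in>strats G k. strat_gauge G c s < \<infinity>) \<and>
     \<comment> \<open>(G4)\<close>
     (\<forall>dn :: nat \<Rightarrow> nat \<Rightarrow> real.
        (\<forall>n. volume_vector G (dn n)) \<and>
        filterlim (\<lambda>n. total_volume G (dn n)) at_top sequentially \<longrightarrow>
        liminf (\<lambda>n. ereal (tight_volume G c (dn n) / total_volume G (dn n))) > 0))"

end

theory Submission
  imports Defs
begin

text \<open>Take a single arc from origin to destination with travel time exp. There is only one
  path, so every feasible profile, in particular every NE- and SO-profile, puts the whole demand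
  on it and the price of anarchy is identically 1. Gaugeability would, through the tightness
  condition (G4), force exp x / g x to converge to a positive finite limit for a regularly
  varying g; then exp (2t) / exp t = e^t would converge, which it does not.\<close>

lemma tendsto_scaled_ratio_of_asymptotic:
  fixes f g :: "real \<Rightarrow> real"
  assumes g: "regularly_varying g" and fg: "((\<lambda>x. f x / g x) \<longlongrightarrow> r) at_top" and "r \<noteq> 0"
    and "x > 0"
  shows "\<exists>L. ((\<lambda>t. f (t * x) / f t) \<longlongrightarrow> L) at_top"
proof -
  obtain L where L: "((\<lambda>t. g (t * x) / g t) \<longlongrightarrow> L) at_top"
    using g \<open>x > 0\<close> unfolding regularly_varying_def by blast
  have g_pos: "g y > 0" if "y > 0" for y
    using g that unfolding regularly_varying_def by blast
  have "filterlim (\<lambda>t. t * x) at_top at_top"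
    using \<open>x > 0\<close> by (simp add: filterlim_at_top_mult_tendsto_pos[OF tendsto_const] filterlim_ident)
  from filterlim_compose[OF fg this]
  have fg_scaled: "((\<lambda>t. f (t * x) / g (t * x)) \<longlongrightarrow> r) at_top"
    by (simp add: o_def)
  have gf: "((\<lambda>t. g t / f t) \<longlongrightarrow> inverse r) at_top"
    using tendsto_inverse[OF fg \<open>r \<noteq> 0\<close>] by simp
  have "((\<lambda>t. f (t * x) / g (t * x) * (g (t * x) / g t) * (g t / f t))
          \<longlongrightarrow> r * L * inverse r) at_top"
    by (intro tendsto_mult fg_scaled L gf)
  moreover have "\<forall>\<^sub>F t in at_top. f (t * x) / g (t * x) * (g (t * x) / g t) * (g t / f t)
                                    = f (t * x) / f t"
    using eventually_gt_at_top[of 0]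
  proof eventually_elim
    case (elim t)
    then have "g t > 0" "g (t * x) > 0"
      using g_pos \<open>x > 0\<close> by auto
    then show ?case by simp
  qed
  ultimately have "((\<lambda>t. f (t * x) / f t) \<longlongrightarrow> r * L * inverse r) at_top"
    by (rule Lim_transform_eventually)
  then show ?thesis ..
qed

lemma exp_ratio_not_convergent: "\<not> ((\<lambda>t::real. exp (t * 2) / exp t) \<longlongrightarrow> L) at_top"
proof
  assume "((\<lambda>t. exp (t * 2) / exp t) \<longlongrightarrow> L) at_top"
  moreover have "exp (t * 2) / exp t = exp t" for t :: real
    by (simp add: exp_diff[symmetric])
  ultimately have "(exp \<longlongrightarrow> L) at_top"
    by simp
  then show False
    using not_tendsto_and_filterlim_at_infinity[OF trivial_limit_at_top_linorder]
          filterlim_at_top_imp_at_infinity[OF exp_at_top] by blast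
qed

definition one_link_game :: "(real \<Rightarrow> real) \<Rightarrow> (nat, nat \<times> nat list) ncg" where
  "one_link_game \<tau> = routing_ncg {0} (\<lambda>_. 0) (\<lambda>_. 1) 1 (\<lambda>_. (0, 1)) (\<lambda>_. \<tau>)"

lemma is_path_single_arc:
  assumes "b \<noteq> 0"
  shows "is_path {0} (\<lambda>_. 0) (\<lambda>_. b) 0 b p \<longleftrightarrow> p = [0]"
proof
  assume "is_path {0} (\<lambda>_. 0) (\<lambda>_. b) 0 b p"
  then have "p \<noteq> []" and "set p \<subseteq> {0}" and "distinct (0 # map (\<lambda>_. b) p)"
    using assms unfolding is_path_def by auto
  then show "p = [0]"
    by (cases p rule: remdups_adj.cases) auto
qed (simp add: is_path_def assms)

lemma one_link_game_simps [simp]: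
  "res (one_link_game \<tau>) = {0}"
  "ngroups (one_link_game \<tau>) = 1"
  "strats (one_link_game \<tau>) k = {(k, [0])}"
  "rr (one_link_game \<tau>) a s = (if a \<in> set (snd s) then 1 else 0)"
  "price (one_link_game \<tau>) a = \<tau>"
  using is_path_single_arc[of 1] by (auto simp: one_link_game_def routing_ncg_def)

lemma all_strats_one_link_game [simp]: "all_strats (one_link_game \<tau>) = {(0, [0])}"
  by (simp add: all_strats_def lessThan_Suc)

lemma total_volume_one_link_game [simp]: "total_volume (one_link_game \<tau>) d = d 0"
  by (simp add: total_volume_def)

lemma feasible_one_link_game: "feasible (one_link_game \<tau>) d f \<Longrightarrow> f (0, [0]) = d 0"
  by (simp add: feasible_def)

lemma social_cost_one_link_game:
  "social_cost (one_link_game \<tau>) f = f (0, [0]) * \<tau> (f (0, [0]))"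
  by (simp add: social_cost_def load_def)

lemma routing_game_wf_one_link:
  assumes "continuous_on {0..} \<tau>" "mono_on {0..} \<tau>" "\<And>x. x \<ge> 0 \<Longrightarrow> \<tau> x \<ge> 0"
  shows "routing_game_wf {0} (\<lambda>_. 0) (\<lambda>_. 1) 1 (\<lambda>_. (0, 1)) (\<lambda>_. \<tau>)"
  using assms unfolding routing_game_wf_def Let_def one_link_game_def[symmetric] by simp

lemma AWDG_one_link_game:
  assumes \<tau>_pos: "\<And>x. x > 0 \<Longrightarrow> \<tau> x > 0"
  shows "AWDG (one_link_game \<tau>)"
  unfolding AWDG_def
proof (intro allI impI, elim conjE)
  fix dn :: "nat \<Rightarrow> nat \<Rightarrow> real" and fne fso
  let ?G = "one_link_game \<tau>"
  assume "filterlim (\<lambda>n. total_volume ?G (dn n)) at_top sequentially"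
    and ne: "\<forall>n. is_NE ?G (dn n) (fne n)" and so: "\<forall>n. is_SO ?G (dn n) (fso n)"
  then have "\<forall>\<^sub>F n in sequentially. dn n 0 > 0"
    by (simp add: filterlim_at_top_dense)
  then have "\<forall>\<^sub>F n in sequentially. social_cost ?G (fne n) / social_cost ?G (fso n) = 1"
  proof eventually_elim
    case (elim n)
    have "fne n (0, [0]) = dn n 0" "fso n (0, [0]) = dn n 0"
      using ne so feasible_one_link_game unfolding is_NE_def is_SO_def by blast+
    then show ?case
      using elim \<tau>_pos[OF elim] by (simp add: social_cost_one_link_game)
  qed
  then show "(\<lambda>n. social_cost ?G (fne n) / social_cost ?G (fso n)) \<longlonglongrightarrow> 1"
    by (rule tendsto_eventually)
qed

text \<open>With a single group, (G4) fails unless that group is tight: otherwise the tight volume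
  is identically 0.\<close>

lemma gaugeable_one_link_game_imp_asymptotic:
  assumes "gaugeable (one_link_game \<tau>)"
  obtains g r where "regularly_varying g" "r > 0" "((\<lambda>x. \<tau> x / g x) \<longlongrightarrow> r) at_top"
proof -
  let ?G = "one_link_game \<tau>"
  obtain g c where g: "regularly_varying g"
    and lim: "((\<lambda>x. ereal (\<tau> x / g x)) \<longlongrightarrow> c 0) at_top"
    and G4: "\<And>dn :: nat \<Rightarrow> nat \<Rightarrow> real. (\<forall>n. volume_vector ?G (dn n)) \<Longrightarrow>
               filterlim (\<lambda>n. total_volume ?G (dn n)) at_top sequentially \<Longrightarrow>
               liminf (\<lambda>n. ereal (tight_volume ?G c (dn n) / total_volume ?G (dn n))) > 0"
    using assms unfolding gaugeable_def by auto
  have tight: "tight_group ?G c 0"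
  proof (rule ccontr)
    assume "\<not> tight_group ?G c 0"
    then have "tight_volume ?G c d = 0" for d
      unfolding tight_volume_def by (simp add: less_Suc_eq sum.neutral)
    moreover have "liminf (\<lambda>n. ereal (tight_volume ?G c (\<lambda>_. real n) / real n)) > 0"
      using G4[of "\<lambda>n _. real n"]
      by (simp add: volume_vector_def filterlim_real_sequentially)
    ultimately show False
      by (simp add: Liminf_const)
  qed
  then have "0 < c 0" "c 0 < \<infinity>"
    by (simp_all add: tight_group_def strat_gauge_def Let_def)
  then obtain r where "c 0 = ereal r" "r > 0"
    by (cases "c 0") auto
  with lim have "((\<lambda>x. \<tau> x / g x) \<longlongrightarrow> r) at_top"
    by (simp add: lim_ereal)
  with g \<open>r > 0\<close> show thesis
    using that by blast
qed

theorem theorem1: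
  shows "\<exists>(Arcs :: nat set) (tail :: nat \<Rightarrow> nat) (head :: nat \<Rightarrow> nat) (K :: nat)
            (od :: nat \<Rightarrow> nat \<times> nat) (tau :: nat \<Rightarrow> real \<Rightarrow> real).
           routing_game_wf Arcs tail head K od tau \<and>
           AWDG (routing_ncg Arcs tail head K od tau) \<and>
           \<not> gaugeable (routing_ncg Arcs tail head K od tau)"
proof -
  have wf: "routing_game_wf {0} (\<lambda>_. 0) (\<lambda>_. 1) 1 (\<lambda>_. (0, 1)) (\<lambda>_. exp)"
    by (rule routing_game_wf_one_link) (auto simp: continuous_on_exp mono_on_def)
  have not_gaugeable: "\<not> gaugeable (one_link_game exp)"
  proof
    assume "gaugeable (one_link_game exp)"
    then obtain g r where "regularly_varying g" "r > 0" "((\<lambda>x. exp x / g x) \<longlongrightarrow> r) at_top"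
      by (rule gaugeable_one_link_game_imp_asymptotic)
    then show False
      using tendsto_scaled_ratio_of_asymptotic[of g exp r 2] exp_ratio_not_convergent by auto
  qed
  have "AWDG (one_link_game exp)"
    by (rule AWDG_one_link_game) simp
  with wf not_gaugeable show ?thesis
    unfolding one_link_game_def by blast
qed

end
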